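(* For every positive integer $m$ there exist real coefficients $d_{m}(\alpha)$, $\alpha\subseteq[n]$ with $|\alpha|\le m$ (independent of the state), such that for every $n$-qubit pure state $\ket{\psi}$, $\sum_{\mathbf{z}\in\{0,1\}^n}w(\mathbf{z})^m p_\psi(\mathbf{z})=\sum_{\alpha\subseteq[n],\,|\alpha|\le m}d_m(\alpha)\,\mathrm{Tr}[\rho_\alpha^2]$. That is, the $m$-th moment of the number of Bell pairs generated in the parallelized SWAP test is a function only of the purities of the reduced states on at most $m$ qubits.
   Context: With $\mathbb{F}^{(i)}$ the swap of the $i$-th qubits of two copies of $\ket{\psi}$, $p_\psi(\mathbf{z})=\mathrm{Tr}\big[\big(\bigotimes_{i=1}^n\tfrac12(\mathbb{1}+(-1)^{z_i}\mathbb{F}^{(i)})\big)(\ket{\psi}\!\bra{\psi})^{\otimes 2}\big]$ is the outcome distribution of the parallelized controlled-SWAP test; $w(\mathbf{z})$ is the Hamming weight (number of Bell pairs produced); $\rho_\alpha$ is the reduced state on qubits $\alpha$, with $\mathrm{Tr}[\rho_\emptyset^2]=1$. *)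

theory Defs
  imports Complex_Main
begin

text \<open>Computational basis of n qubits: a bit string x in {0,1}^n is encoded as the
  set of positions i < n with x_i = 1, i.e. an element of Pow {..<n}.
  A (not necessarily normalised) vector is a function psi :: nat set => complex,
  only its values on Pow {..<n} matter.\<close>

definition bitstrings :: "nat \<Rightarrow> nat set set" where
  "bitstrings n = Pow {..<n}"

definition normalized_state :: "nat \<Rightarrow> (nat set \<Rightarrow> complex) \<Rightarrow> bool" where
  "normalized_state n psi \<longleftrightarrow> (\<Sum>x\<in>bitstrings n. (cmod (psi x))\<^sup>2) = 1"

definition hamming :: "nat set \<Rightarrow> nat" where
  "hamming z = card z"

text \<open>Matrix element <a' b'| 1/2 (1 + s F) |a b> of the two-qubit operator acting on the
  i-th qubit of copy 1 and copy 2, with s = (-1)^(z_i); basis states of the two copies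
  are (x, y), primed for the bra.\<close>
definition local_proj ::
  "nat set \<Rightarrow> nat \<Rightarrow> nat set \<Rightarrow> nat set \<Rightarrow> nat set \<Rightarrow> nat set \<Rightarrow> complex" where
  "local_proj z i x' y' x y =
     ((if (i \<in> x') = (i \<in> x) \<and> (i \<in> y') = (i \<in> y) then 1 else 0)
      + (if i \<in> z then -1 else 1)
        * (if (i \<in> x') = (i \<in> y) \<and> (i \<in> y') = (i \<in> x) then 1 else 0)) / 2"

definition swap_proj ::
  "nat \<Rightarrow> nat set \<Rightarrow> nat set \<Rightarrow> nat set \<Rightarrow> nat set \<Rightarrow> nat set \<Rightarrow> complex" where
  "swap_proj n z x' y' x y = (\<Prod>i<n. local_proj z i x' y' x y)"

text \<open>p_psi(z) = Tr[ Pi_z (|psi><psi|)^(tensor 2) ] = <psi psi| Pi_z |psi psi>.\<close>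
definition swap_test_prob :: "nat \<Rightarrow> (nat set \<Rightarrow> complex) \<Rightarrow> nat set \<Rightarrow> complex" where
  "swap_test_prob n psi z =
     (\<Sum>x'\<in>bitstrings n. \<Sum>y'\<in>bitstrings n. \<Sum>x\<in>bitstrings n. \<Sum>y\<in>bitstrings n.
        cnj (psi x') * cnj (psi y') * swap_proj n z x' y' x y * psi x * psi y)"

definition reduced_state ::
  "nat \<Rightarrow> (nat set \<Rightarrow> complex) \<Rightarrow> nat set \<Rightarrow> nat set \<Rightarrow> nat set \<Rightarrow> complex" where
  "reduced_state n psi \<alpha> a a' =
     (\<Sum>b\<in>Pow ({..<n} - \<alpha>). psi (a \<union> b) * cnj (psi (a' \<union> b)))"

definition purity :: "nat \<Rightarrow> (nat set \<Rightarrow> complex) \<Rightarrow> nat set \<Rightarrow> complex" where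
  "purity n psi \<alpha> =
     (\<Sum>a\<in>Pow \<alpha>. \<Sum>a'\<in>Pow \<alpha>. reduced_state n psi \<alpha> a a' * reduced_state n psi \<alpha> a' a)"

end

theory Submission
  imports Defs
begin

text \<open>Expanding the tensor product of the projectors 1/2 (1 + (-1)^(z_i) F^(i)) gives
  Pi_z = 2^(-n) \<Sum>_\<beta> \<chi>_\<beta>(z) F_\<beta>, where F_\<beta> swaps the qubits \<beta> of the two copies and
  \<chi>_\<beta>(z) = (-1)^|z \<inter> \<beta>| is a Walsh character. By the swap trick
  <\<psi>\<psi>|F_\<beta>|\<psi>\<psi>> = Tr[\<rho>_\<beta>^2], so the m-th moment equals \<Sum>_\<beta> d(\<beta>) Tr[\<rho>_\<beta>^2] with d(\<beta>)
  the Walsh-Fourier coefficient of w(z)^m. Since w(z)^m is a polynomial of degree m in the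
  bits of z, these coefficients vanish for |\<beta>| > m. The identity is homogeneous in \<psi> and
  also holds for m = 0.\<close>

definition walsh :: "'a set \<Rightarrow> 'a set \<Rightarrow> real" where
  "walsh z \<beta> = (\<Prod>i\<in>\<beta>. if i \<in> z then -1 else 1)"

lemma walsh_toggle:
  assumes "finite \<beta>" "j \<in> \<beta>"
  shows "walsh (if j \<in> z then z - {j} else insert j z) \<beta> = - walsh z \<beta>"
proof -
  have "walsh z' \<beta> = (if j \<in> z' then -1 else 1) * (\<Prod>i\<in>\<beta>-{j}. if i \<in> z' then -1 else 1)" for z'
    unfolding walsh_def using assms by (simp add: prod.remove)
  moreover have "(\<Prod>i\<in>\<beta>-{j}. if i \<in> (if j \<in> z then z - {j} else insert j z) then -1 else 1)
      = (\<Prod>i\<in>\<beta>-{j}. if i \<in> z then -1 else (1::real))"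
    by (rule prod.cong) auto
  ultimately show ?thesis by simp
qed

lemma sum_walsh_supersets_eq_0:
  assumes "finite N" "\<beta> \<subseteq> N" "\<not> \<beta> \<subseteq> S"
  shows "(\<Sum>z\<in>Pow N. of_bool (S \<subseteq> z) * walsh z \<beta>) = 0"
proof -
  obtain j where j: "j \<in> \<beta>" "j \<notin> S" using assms(3) by blast
  define toggle where "toggle z = (if j \<in> z then z - {j} else insert j z)" for z
  have "bij_betw toggle (Pow N) (Pow N)"
    by (rule bij_betw_byWitness[where f' = toggle]) (use j assms(2) in \<open>auto simp: toggle_def\<close>)
  moreover have "of_bool (S \<subseteq> toggle z) * walsh (toggle z) \<beta> = - (of_bool (S \<subseteq> z) * walsh z \<beta>)" for z
    using walsh_toggle[OF finite_subset[OF assms(2,1)] j(1)] j(2)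
    by (auto simp: toggle_def subset_insert_iff)
  ultimately have "(\<Sum>z\<in>Pow N. of_bool (S \<subseteq> z) * walsh z \<beta>) = - (\<Sum>z\<in>Pow N. of_bool (S \<subseteq> z) * walsh z \<beta>)"
    using sum.reindex_bij_betw[of toggle "Pow N" "Pow N" "\<lambda>z. of_bool (S \<subseteq> z) * walsh z \<beta>"]
    by (simp add: sum_negf)
  then show ?thesis by simp
qed

lemma card_eq_sum_of_bool:
  assumes "finite N" "z \<subseteq> N"
  shows "real (card z) = (\<Sum>i\<in>N. of_bool (i \<in> z))"
proof -
  have "N \<inter> {i. i \<in> z} = z" using assms(2) by blast
  then show ?thesis using assms(1) by simp
qed

lemma sum_card_pow_walsh_supersets_eq_0:
  assumes "finite N" "\<beta> \<subseteq> N" "finite S" "card S + m < card \<beta>"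
  shows "(\<Sum>z\<in>Pow N. of_bool (S \<subseteq> z) * real (card z) ^ m * walsh z \<beta>) = 0"
  using assms(3,4)
proof (induction m arbitrary: S)
  case 0
  have "\<not> \<beta> \<subseteq> S"
    using 0 card_mono[OF 0(1)] by (auto simp: not_le[symmetric])
  then show ?case using sum_walsh_supersets_eq_0[OF assms(1,2)] by (simp only: power_0 mult_1_right)
next
  case (Suc m)
  txt \<open>Writing |z| = \<Sum>_i [i \<in> z] trades one factor |z| for one more element forced into z.\<close>
  have "(\<Sum>z\<in>Pow N. of_bool (S \<subseteq> z) * real (card z) ^ Suc m * walsh z \<beta>)
      = (\<Sum>z\<in>Pow N. \<Sum>i\<in>N. of_bool (insert i S \<subseteq> z) * real (card z) ^ m * walsh z \<beta>)"
  proof (rule sum.cong[OF refl])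
    fix z assume "z \<in> Pow N"
    then have "real (card z) = (\<Sum>i\<in>N. of_bool (i \<in> z))"
      using card_eq_sum_of_bool[OF assms(1)] by simp
    then have "of_bool (S \<subseteq> z) * real (card z) ^ Suc m * walsh z \<beta>
        = (\<Sum>i\<in>N. of_bool (i \<in> z)) * (of_bool (S \<subseteq> z) * real (card z) ^ m * walsh z \<beta>)"
      by (simp only: power_Suc ac_simps)
    also have "\<dots> = (\<Sum>i\<in>N. of_bool (i \<in> z) * (of_bool (S \<subseteq> z) * real (card z) ^ m * walsh z \<beta>))"
      by (rule sum_distrib_right)
    also have "\<dots> = (\<Sum>i\<in>N. of_bool (insert i S \<subseteq> z) * real (card z) ^ m * walsh z \<beta>)"
      by (rule sum.cong) auto
    finally show "of_bool (S \<subseteq> z) * real (card z) ^ Suc m * walsh z \<beta> = \<dots>" .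
  qed
  also have "\<dots> = (\<Sum>i\<in>N. \<Sum>z\<in>Pow N. of_bool (insert i S \<subseteq> z) * real (card z) ^ m * walsh z \<beta>)"
    by (rule sum.swap)
  also have "\<dots> = 0"
  proof (rule sum.neutral, rule ballI)
    fix i
    have "card (insert i S) \<le> card S + 1"
      using Suc.prems(1) by (simp add: card_insert_if)
    then have "card (insert i S) + m < card \<beta>"
      using Suc.prems(2) by linarith
    then show "(\<Sum>z\<in>Pow N. of_bool (insert i S \<subseteq> z) * real (card z) ^ m * walsh z \<beta>) = 0"
      using Suc.prems(1) by (intro Suc.IH) simp_all
  qed
  finally show ?case .
qed

lemma sum_card_pow_walsh_eq_0:
  assumes "finite N" "\<beta> \<subseteq> N" "m < card \<beta>"
  shows "(\<Sum>z\<in>Pow N. real (card z) ^ m * walsh z \<beta>) = 0"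
  using sum_card_pow_walsh_supersets_eq_0[OF assms(1,2), of "{}" m] assms(3) by simp

lemma sum_Pow_Un_disjoint:
  assumes "A \<inter> B = {}"
  shows "(\<Sum>x\<in>Pow (A \<union> B). f x) = (\<Sum>a\<in>Pow A. \<Sum>b\<in>Pow B. f (a \<union> b))"
proof -
  have "bij_betw (\<lambda>(a, b). a \<union> b) (Pow A \<times> Pow B) (Pow (A \<union> B))"
    by (rule bij_betw_byWitness[where f' = "\<lambda>x. (x \<inter> A, x \<inter> B)"]) (use assms in auto)
  then show ?thesis
    by (simp add: sum.reindex_bij_betw[symmetric] sum.cartesian_product case_prod_beta')
qed

lemma sum_swap_innermost:
  "(\<Sum>x\<in>A. \<Sum>y\<in>B. \<Sum>b\<in>C. g x y b) = (\<Sum>b\<in>C. \<Sum>x\<in>A. \<Sum>y\<in>B. g x y b)"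
  by (simp only: sum.swap[of _ _ C])

lemma prod_of_bool:
  assumes "finite A"
  shows "(\<Prod>i\<in>A. of_bool (P i)) = (of_bool (\<forall>i\<in>A. P i) :: 'a :: comm_semiring_1)"
  using assms by (induction A rule: finite_induct) auto

text \<open>F_\<beta> maps |x, y> to |swap_bits \<beta> x y, swap_bits \<beta> y x>.\<close>

definition swap_bits :: "'a set \<Rightarrow> 'a set \<Rightarrow> 'a set \<Rightarrow> 'a set" where
  "swap_bits \<beta> x y = (x - \<beta>) \<union> (y \<inter> \<beta>)"

lemma swap_bits_pair_iff:
  assumes "x' \<subseteq> N" "y' \<subseteq> N" "x \<subseteq> N" "y \<subseteq> N" "\<beta> \<subseteq> N"
  shows "x = swap_bits \<beta> x' y' \<and> y = swap_bits \<beta> y' x' \<longleftrightarrow>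
    (\<forall>i\<in>\<beta>. (i \<in> x') = (i \<in> y) \<and> (i \<in> y') = (i \<in> x)) \<and>
    (\<forall>i\<in>N - \<beta>. (i \<in> x') = (i \<in> x) \<and> (i \<in> y') = (i \<in> y))"
  using assms unfolding swap_bits_def by blast

text \<open><\<psi>\<psi>|F_\<beta>|\<psi>\<psi>>, i.e. Tr[F_\<beta> (|\<psi>><\<psi>|)^(\<otimes>2)].\<close>

definition swap_expectation :: "nat \<Rightarrow> (nat set \<Rightarrow> complex) \<Rightarrow> nat set \<Rightarrow> complex" where
  "swap_expectation n psi \<beta> = (\<Sum>x\<in>bitstrings n. \<Sum>y\<in>bitstrings n.
     cnj (psi x) * cnj (psi y) * psi (swap_bits \<beta> x y) * psi (swap_bits \<beta> y x))"

lemma purity_eq_swap_expectation: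
  assumes "\<beta> \<subseteq> {..<n}"
  shows "purity n psi \<beta> = swap_expectation n psi \<beta>"
proof -
  define C where "C = {..<n} - \<beta>"
  have split: "Pow {..<n} = Pow (\<beta> \<union> C)" "\<beta> \<inter> C = {}"
    using assms by (auto simp: C_def)
  have swap_Un: "swap_bits \<beta> (a \<union> b) (a' \<union> c) = a' \<union> b"
    if "a \<subseteq> \<beta>" "a' \<subseteq> \<beta>" "b \<subseteq> C" "c \<subseteq> C" for a a' b c
    using that by (auto simp: swap_bits_def C_def)
  have "purity n psi \<beta> = (\<Sum>a\<in>Pow \<beta>. \<Sum>a'\<in>Pow \<beta>. \<Sum>b\<in>Pow C. \<Sum>c\<in>Pow C.
      psi (a \<union> b) * cnj (psi (a' \<union> b)) * (psi (a' \<union> c) * cnj (psi (a \<union> c))))"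
    unfolding purity_def reduced_state_def C_def by (simp add: sum_product)
  also have "\<dots> = (\<Sum>a'\<in>Pow \<beta>. \<Sum>a\<in>Pow \<beta>. \<Sum>b\<in>Pow C. \<Sum>c\<in>Pow C.
      psi (a \<union> b) * cnj (psi (a' \<union> b)) * (psi (a' \<union> c) * cnj (psi (a \<union> c))))"
    by (rule sum.swap)
  also have "\<dots> = (\<Sum>a'\<in>Pow \<beta>. \<Sum>b\<in>Pow C. \<Sum>a\<in>Pow \<beta>. \<Sum>c\<in>Pow C.
      psi (a \<union> b) * cnj (psi (a' \<union> b)) * (psi (a' \<union> c) * cnj (psi (a \<union> c))))"
    by (rule sum.cong[OF refl], rule sum.swap)
  also have "\<dots> = (\<Sum>x\<in>Pow (\<beta> \<union> C). \<Sum>y\<in>Pow (\<beta> \<union> C).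
      cnj (psi x) * cnj (psi y) * psi (swap_bits \<beta> x y) * psi (swap_bits \<beta> y x))"
    unfolding sum_Pow_Un_disjoint[OF split(2)]
    by (intro sum.cong refl) (simp add: swap_Un Un_commute ac_simps)
  finally show ?thesis
    unfolding swap_expectation_def bitstrings_def split(1) .
qed

lemma swap_proj_eq_sum_walsh:
  assumes "x' \<in> bitstrings n" "y' \<in> bitstrings n" "x \<in> bitstrings n" "y \<in> bitstrings n"
  shows "swap_proj n z x' y' x y = (\<Sum>\<beta>\<in>bitstrings n. complex_of_real (walsh z \<beta> / 2 ^ n) *
    of_bool (x = swap_bits \<beta> x' y' \<and> y = swap_bits \<beta> y' x'))"
proof -
  let ?s = "\<lambda>i. if i \<in> z then -1 else 1 :: complex"
  let ?E = "\<lambda>i. (i \<in> x') = (i \<in> x) \<and> (i \<in> y') = (i \<in> y)"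
  let ?F = "\<lambda>i. (i \<in> x') = (i \<in> y) \<and> (i \<in> y') = (i \<in> x)"
  have "swap_proj n z x' y' x y = (\<Prod>i<n. ?s i / 2 * of_bool (?F i) + of_bool (?E i) / 2)"
    unfolding swap_proj_def local_proj_def of_bool_def by (simp add: add_divide_distrib add.commute)
  also have "\<dots> = (\<Sum>\<beta>\<in>bitstrings n.
      (\<Prod>i\<in>\<beta>. ?s i / 2 * of_bool (?F i)) * (\<Prod>i\<in>{..<n} - \<beta>. of_bool (?E i) / 2))"
    unfolding bitstrings_def by (rule prod_add) simp
  also have "\<dots> = (\<Sum>\<beta>\<in>bitstrings n. complex_of_real (walsh z \<beta> / 2 ^ n) *
      of_bool (x = swap_bits \<beta> x' y' \<and> y = swap_bits \<beta> y' x'))"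
  proof (rule sum.cong[OF refl])
    fix \<beta> assume "\<beta> \<in> bitstrings n"
    then have \<beta>: "\<beta> \<subseteq> {..<n}" "finite \<beta>"
      by (auto simp: bitstrings_def finite_subset)
    have "card \<beta> + card ({..<n} - \<beta>) = n"
      using \<beta> card_mono[of "{..<n}" \<beta>] by (simp add: card_Diff_subset)
    then have pow: "(2 :: complex) ^ card \<beta> * 2 ^ card ({..<n} - \<beta>) = 2 ^ n"
      by (metis power_add)
    have walsh: "complex_of_real (walsh z \<beta>) = (\<Prod>i\<in>\<beta>. ?s i)"
      unfolding walsh_def of_real_prod by (rule prod.cong) auto
    have swap: "(\<forall>i\<in>\<beta>. ?F i) \<and> (\<forall>i\<in>{..<n} - \<beta>. ?E i) \<longleftrightarrow>
        x = swap_bits \<beta> x' y' \<and> y = swap_bits \<beta> y' x'"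
      using assms \<beta>(1) by (simp add: bitstrings_def swap_bits_pair_iff[where N = "{..<n}"])
    have "(\<Prod>i\<in>\<beta>. ?s i / 2 * of_bool (?F i)) * (\<Prod>i\<in>{..<n} - \<beta>. of_bool (?E i) / 2)
        = (\<Prod>i\<in>\<beta>. ?s i) / 2 ^ n * (of_bool (\<forall>i\<in>\<beta>. ?F i) * of_bool (\<forall>i\<in>{..<n} - \<beta>. ?E i))"
      using \<beta>(2) by (simp add: prod.distrib prod_dividef prod_of_bool pow[symmetric])
    also have "\<dots> = complex_of_real (walsh z \<beta> / 2 ^ n) *
        of_bool (x = swap_bits \<beta> x' y' \<and> y = swap_bits \<beta> y' x')"
      by (simp only: of_real_divide walsh of_real_power of_real_numeral swap[symmetric] of_bool_conj)
    finally show "(\<Prod>i\<in>\<beta>. ?s i / 2 * of_bool (?F i)) * (\<Prod>i\<in>{..<n} - \<beta>. of_bool (?E i) / 2)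
        = complex_of_real (walsh z \<beta> / 2 ^ n) * of_bool (x = swap_bits \<beta> x' y' \<and> y = swap_bits \<beta> y' x')" .
  qed
  finally show ?thesis .
qed

lemma sum_swap_proj_mult:
  assumes "x' \<in> bitstrings n" "y' \<in> bitstrings n"
  shows "(\<Sum>x\<in>bitstrings n. \<Sum>y\<in>bitstrings n. swap_proj n z x' y' x y * f x y)
    = (\<Sum>\<beta>\<in>bitstrings n. complex_of_real (walsh z \<beta> / 2 ^ n) * f (swap_bits \<beta> x' y') (swap_bits \<beta> y' x'))"
proof -
  let ?B = "bitstrings n"
  let ?c = "\<lambda>\<beta>. complex_of_real (walsh z \<beta> / 2 ^ n)"
  have "(\<Sum>x\<in>?B. \<Sum>y\<in>?B. swap_proj n z x' y' x y * f x y)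
      = (\<Sum>x\<in>?B. \<Sum>y\<in>?B. \<Sum>\<beta>\<in>?B. ?c \<beta> * (of_bool (x = swap_bits \<beta> x' y' \<and> y = swap_bits \<beta> y' x') * f x y))"
    using assms by (intro sum.cong refl) (simp only: swap_proj_eq_sum_walsh sum_distrib_right mult.assoc)
  also have "\<dots> = (\<Sum>\<beta>\<in>?B. ?c \<beta> * (\<Sum>x\<in>?B. \<Sum>y\<in>?B. of_bool (x = swap_bits \<beta> x' y' \<and> y = swap_bits \<beta> y' x') * f x y))"
    by (subst sum_swap_innermost) (simp only: sum_distrib_left)
  also have "\<dots> = (\<Sum>\<beta>\<in>?B. ?c \<beta> * f (swap_bits \<beta> x' y') (swap_bits \<beta> y' x'))"
  proof (rule sum.cong[OF refl])
    fix \<beta>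
    have "swap_bits \<beta> x' y' \<in> ?B" "swap_bits \<beta> y' x' \<in> ?B"
      using assms by (auto simp: bitstrings_def swap_bits_def)
    moreover have "(\<Sum>y\<in>?B. of_bool (x = swap_bits \<beta> x' y' \<and> y = swap_bits \<beta> y' x') * f x y)
        = of_bool (x = swap_bits \<beta> x' y') * f x (swap_bits \<beta> y' x')" for x
      using calculation by (cases "x = swap_bits \<beta> x' y'") (simp_all add: bitstrings_def)
    ultimately show "?c \<beta> * (\<Sum>x\<in>?B. \<Sum>y\<in>?B. of_bool (x = swap_bits \<beta> x' y' \<and> y = swap_bits \<beta> y' x') * f x y)
        = ?c \<beta> * f (swap_bits \<beta> x' y') (swap_bits \<beta> y' x')"
      by (simp add: bitstrings_def)
  qed
  finally show ?thesis .
qed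

lemma swap_test_prob_eq_sum_walsh:
  "swap_test_prob n psi z
    = (\<Sum>\<beta>\<in>bitstrings n. complex_of_real (walsh z \<beta> / 2 ^ n) * swap_expectation n psi \<beta>)"
proof -
  let ?B = "bitstrings n"
  let ?c = "\<lambda>\<beta>. complex_of_real (walsh z \<beta> / 2 ^ n)"
  have "swap_test_prob n psi z = (\<Sum>x'\<in>?B. \<Sum>y'\<in>?B. cnj (psi x') * cnj (psi y') *
      (\<Sum>x\<in>?B. \<Sum>y\<in>?B. swap_proj n z x' y' x y * (psi x * psi y)))"
    unfolding swap_test_prob_def by (simp only: sum_distrib_left mult.assoc)
  also have "\<dots> = (\<Sum>x'\<in>?B. \<Sum>y'\<in>?B. \<Sum>\<beta>\<in>?B. ?c \<beta> *
      (cnj (psi x') * cnj (psi y') * psi (swap_bits \<beta> x' y') * psi (swap_bits \<beta> y' x')))"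
    by (intro sum.cong refl) (simp only: sum_swap_proj_mult sum_distrib_left, simp only: mult_ac)
  also have "\<dots> = (\<Sum>\<beta>\<in>?B. ?c \<beta> * swap_expectation n psi \<beta>)"
    unfolding swap_expectation_def by (subst sum_swap_innermost) (simp only: sum_distrib_left)
  finally show ?thesis .
qed

lemma sum_swap_test_prob_eq_sum_purity:
  fixes f :: "nat set \<Rightarrow> real"
  shows "(\<Sum>z\<in>bitstrings n. complex_of_real (f z) * swap_test_prob n psi z)
    = (\<Sum>\<beta>\<in>bitstrings n. complex_of_real ((\<Sum>z\<in>bitstrings n. f z * walsh z \<beta>) / 2 ^ n) * purity n psi \<beta>)"
proof -
  have "(\<Sum>z\<in>bitstrings n. complex_of_real (f z) * swap_test_prob n psi z)
      = (\<Sum>\<beta>\<in>bitstrings n. \<Sum>z\<in>bitstrings n.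
          complex_of_real (f z * walsh z \<beta> / 2 ^ n) * swap_expectation n psi \<beta>)"
    unfolding swap_test_prob_eq_sum_walsh sum_distrib_left
    by (subst sum.swap) (simp add: mult.assoc)
  also have "\<dots> = (\<Sum>\<beta>\<in>bitstrings n.
      complex_of_real ((\<Sum>z\<in>bitstrings n. f z * walsh z \<beta>) / 2 ^ n) * purity n psi \<beta>)"
    by (intro sum.cong refl)
      (simp add: purity_eq_swap_expectation bitstrings_def sum_divide_distrib sum_distrib_right)
  finally show ?thesis .
qed

theorem mainTheorem16:
  fixes n m :: nat
  assumes "m \<ge> 1"
  shows "\<exists>d :: nat set \<Rightarrow> real. \<forall>psi :: nat set \<Rightarrow> complex.
           normalized_state n psi \<longrightarrow>
           (\<Sum>z\<in>bitstrings n. of_nat (hamming z ^ m) * swap_test_prob n psi z)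
           = (\<Sum>\<alpha>\<in>{\<alpha>. \<alpha> \<subseteq> {..<n} \<and> card \<alpha> \<le> m}. complex_of_real (d \<alpha>) * purity n psi \<alpha>)"
proof -
  define d where "d \<beta> = (\<Sum>z\<in>bitstrings n. real (card z) ^ m * walsh z \<beta>) / 2 ^ n" for \<beta>
  have moment: "(\<Sum>z\<in>bitstrings n. of_nat (hamming z ^ m) * swap_test_prob n psi z)
      = (\<Sum>\<beta>\<in>bitstrings n. complex_of_real (d \<beta>) * purity n psi \<beta>)" for psi
    using sum_swap_test_prob_eq_sum_purity[of "\<lambda>z. real (card z) ^ m"]
    by (simp add: hamming_def d_def)
  have low_degree: "(\<Sum>\<beta>\<in>bitstrings n. complex_of_real (d \<beta>) * purity n psi \<beta>)
      = (\<Sum>\<alpha>\<in>{\<alpha>. \<alpha> \<subseteq> {..<n} \<and> card \<alpha> \<le> m}. complex_of_real (d \<alpha>) * purity n psi \<alpha>)" for psi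
    using sum_card_pow_walsh_eq_0[of "{..<n}"]
    by (intro sum.mono_neutral_right) (auto simp: bitstrings_def d_def not_le)
  show ?thesis
    by (intro exI[of _ d] allI impI) (simp only: moment low_degree)
qed

end
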